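(* Let $p$ be a prime with $p\equiv3\pmod 4$. Then $P_{\frac{p-1}2}(3)\equiv0\pmod p$ (i.e. $p$ divides the numerator of the rational number $P_{\frac{p-1}2}(3)$).
   Context: $P_n(x)$ is the $n$-th Legendre polynomial, defined by $\frac1{\sqrt{1-2xt+t^2}}=\sum_{n\ge0}P_n(x)t^n$, equivalently $P_n(x)=\frac1{2^n}\sum_{k=0}^{[n/2]}\frac{(-1)^k(2n-2k)!}{k!(n-k)!(n-2k)!}x^{n-2k}$. *)

theory Defs
  imports Complex_Main "HOL-Computational_Algebra.Primes"
begin

definition legendreP :: "nat \<Rightarrow> 'a::field_char_0 \<Rightarrow> 'a" where
  "legendreP n x = (1 / 2 ^ n) *
     (\<Sum>k = 0..n div 2. of_int ((-1) ^ k) * of_nat (fact (2*n - 2*k))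
        / (of_nat (fact k) * of_nat (fact (n - k)) * of_nat (fact (n - 2*k)))
        * x ^ (n - 2*k))"

end

theory Submission
  imports Defs "HOL-Number_Theory.Number_Theory"
begin

text \<open>
  Write \<open>p = 2n + 1\<close>, so that \<open>n\<close> is odd. The cubic \<open>t(t + 2)(t + 4)\<close> changes sign under
  the reflection \<open>t \<mapsto> -4 - t\<close>, hence \<open>\<Sum>\<^sub>t (t(t + 2)(t + 4))^n \<equiv> 0 (mod p)\<close> with \<open>t\<close>
  running over the residues mod \<open>p\<close>. On the other hand \<open>t(t + 2)(t + 4) = t((t + 3)^2 - 1)\<close>;
  expanding binomially and using that \<open>\<Sum>\<^sub>t t^m\<close> is \<open>-1\<close> or \<open>0\<close> mod \<open>p\<close> according as
  \<open>p - 1\<close> divides \<open>m\<close> or not, only the powers \<open>t^(2n)\<close> survive, and the sum is congruent to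
  \<open>-\<Sum>\<^sub>k (-1)^k C(n,k) C(2n-2k,n) 3^(n-2k) = -2^n P\<^sub>n(3)\<close>.
\<close>

lemma power_sum_binomial_recurrence:
  "(\<Sum>i\<le>m. of_nat (Suc m choose i) * (\<Sum>t<p. int t ^ i)) = int p ^ Suc m"
proof -
  have step: "int (Suc t) ^ Suc m - int t ^ Suc m = (\<Sum>i\<le>m. of_nat (Suc m choose i) * int t ^ i)" for t
    using binomial_ring[of "int t" 1 "Suc m"] by (simp add: sum.atMost_Suc add.commute)
  have "(\<Sum>i\<le>m. of_nat (Suc m choose i) * (\<Sum>t<p. int t ^ i))
      = (\<Sum>i\<le>m. \<Sum>t<p. of_nat (Suc m choose i) * int t ^ i)"
    by (simp add: sum_distrib_left)
  also have "\<dots> = (\<Sum>t<p. \<Sum>i\<le>m. of_nat (Suc m choose i) * int t ^ i)"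
    by (rule sum.swap)
  also have "\<dots> = (\<Sum>t<p. int (Suc t) ^ Suc m - int t ^ Suc m)"
    by (simp only: step)
  also have "\<dots> = int p ^ Suc m"
    using sum_lessThan_telescope[of "\<lambda>t. int t ^ Suc m" p] by simp
  finally show ?thesis .
qed

lemma prime_dvd_power_sum_small:
  assumes "prime p" "0 < m" "m < p - 1"
  shows "int p dvd (\<Sum>t<p. int t ^ m)"
  using assms(2,3)
proof (induction m rule: less_induct)
  case (less m)
  let ?S = "\<lambda>i. \<Sum>t<p. int t ^ i"
  have "{..m} = insert m (insert 0 {1..<m})"
    using less.prems by auto
  then have "int (Suc m) * ?S m
      = int p ^ Suc m - int p - (\<Sum>i\<in>{1..<m}. of_nat (Suc m choose i) * ?S i)"
    using less.prems power_sum_binomial_recurrence[of m p] by (simp add: sum.insert)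
  moreover have "int p dvd (\<Sum>i\<in>{1..<m}. of_nat (Suc m choose i) * ?S i)"
    by (rule dvd_sum, rule dvd_mult) (use less in auto)
  ultimately have "int p dvd int (Suc m) * ?S m"
    by (simp add: dvd_diff)
  moreover have "\<not> int p dvd int (Suc m)"
    unfolding int_dvd_int_iff using less.prems by (auto dest: dvd_imp_le)
  moreover have "prime (int p)"
    using assms(1) by simp
  ultimately show ?case
    using prime_dvd_mult_iff by blast
qed

lemma power_prime_minus_one_cong:
  assumes "prime p" "t < p"
  shows "[int t ^ (p - 1) = (if t = 0 then 0 else 1)] (mod int p)"
proof (cases "t = 0")
  case True
  then show ?thesis using prime_gt_1_nat[OF assms(1)] by (simp add: power_0_left)
next
  case False
  then have "\<not> p dvd t" using assms(2) by (auto dest: dvd_imp_le)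
  then have "[t ^ (p - 1) = 1] (mod p)" using fermat_theorem assms(1) by blast
  then have "[int (t ^ (p - 1)) = int 1] (mod int p)"
    by (simp only: cong_int_iff)
  then show ?thesis using False by simp
qed

lemma power_sum_prime_minus_one:
  assumes "prime p"
  shows "[(\<Sum>t<p. int t ^ (p - 1)) = - 1] (mod int p)"
proof -
  have "[(\<Sum>t<p. int t ^ (p - 1)) = (\<Sum>t<p. if t = 0 then 0 else 1)] (mod int p)"
    by (rule cong_sum) (rule power_prime_minus_one_cong[OF assms], simp)
  also have "(\<Sum>t<p. if t = 0 then 0 else 1 :: int) = int p - 1"
    using prime_gt_0_nat[OF assms] by (simp add: sum.If_cases Diff_eq[symmetric])
  also have "[int p - 1 = - 1] (mod int p)"
    by (simp add: cong_iff_dvd_diff)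
  finally show ?thesis .
qed

lemma power_sum_period:
  assumes "prime p" "0 < m"
  shows "[(\<Sum>t<p. int t ^ (m + (p - 1))) = (\<Sum>t<p. int t ^ m)] (mod int p)"
proof (rule cong_sum)
  fix t assume "t \<in> {..<p}"
  then have "[int t ^ m * int t ^ (p - 1) = int t ^ m * (if t = 0 then 0 else 1)] (mod int p)"
    by (intro cong_mult cong_refl power_prime_minus_one_cong[OF assms(1)]) simp
  then show "[int t ^ (m + (p - 1)) = int t ^ m] (mod int p)"
    using assms(2) by (simp add: power_add power_0_left split: if_splits)
qed

lemma power_sum_mod_prime:
  assumes "prime p" "0 < m"
  shows "[(\<Sum>t<p. int t ^ m) = (if (p - 1) dvd m then - 1 else 0)] (mod int p)"
  using assms(2)
proof (induction m rule: less_induct)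
  case (less m)
  consider "m < p - 1" | "m = p - 1" | "p - 1 < m" by linarith
  then show ?case
  proof cases
    case 1
    then have "\<not> (p - 1) dvd m"
      using less.prems by (auto dest: dvd_imp_le)
    then show ?thesis
      using prime_dvd_power_sum_small[OF assms(1) less.prems 1] by (simp add: cong_0_iff)
  next
    case 2
    then show ?thesis using power_sum_prime_minus_one[OF assms(1)] by simp
  next
    case 3
    define k where "k = m - (p - 1)"
    have "0 < k" "k < m" and m: "m = k + (p - 1)"
      using 3 prime_gt_1_nat[OF assms(1)] by (auto simp: k_def)
    have "(p - 1) dvd m \<longleftrightarrow> (p - 1) dvd k"
      unfolding m by (simp add: dvd_add_left_iff)
    moreover have "[(\<Sum>t<p. int t ^ m) = (if (p - 1) dvd k then - 1 else 0)] (mod int p)"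
      using cong_trans[OF power_sum_period[OF assms(1) \<open>0 < k\<close>] less.IH[OF \<open>k < m\<close> \<open>0 < k\<close>]]
      unfolding m .
    ultimately show ?thesis
      by simp
  qed
qed

lemma sum_lessThan_reflect_mod:
  assumes "0 < p"
  shows "(\<Sum>t<p. f (nat ((c - int t) mod int p))) = (\<Sum>t<p. f t)"
proof -
  define \<sigma> where "\<sigma> t = nat ((c - int t) mod int p)" for t
  have \<sigma>_lt: "\<sigma> t < p" for t
    using assms by (simp add: \<sigma>_def nat_less_iff)
  have \<sigma>_\<sigma>: "\<sigma> (\<sigma> t) = t" if "t < p" for t
  proof -
    have "int (\<sigma> (\<sigma> t)) = (c - (c - int t) mod int p) mod int p"
      using assms by (simp add: \<sigma>_def)
    also have "\<dots> = int t"
      using that by (simp add: mod_diff_right_eq)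
    finally show ?thesis by simp
  qed
  show ?thesis
    unfolding \<sigma>_def[symmetric]
    by (rule sum.reindex_bij_witness[where i = \<sigma> and j = \<sigma>]) (auto simp: \<sigma>_lt \<sigma>_\<sigma>)
qed

lemma prime_dvd_sum_odd_power_progression_product:
  assumes "prime p" "p > 2" "odd n"
  shows "int p dvd (\<Sum>t<p. (int t * (int t + 2) * (int t + 4)) ^ n)"
proof -
  define g where "g x = (x * (x + 2) * (x + 4)) ^ n" for x :: int
  let ?S = "\<Sum>t<p. g (int t)"
  have odd_g: "g (-4 - x) = - g x" for x
  proof -
    have reflect: "(-4 - x) * (-4 - x + 2) * (-4 - x + 4) = - (x * (x + 2) * (x + 4))"
      by (simp add: algebra_simps)
    show ?thesis
      unfolding g_def reflect by (rule power_minus_odd[OF assms(3)])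
  qed
  have "?S = (\<Sum>t<p. g ((-4 - int t) mod int p))"
    using sum_lessThan_reflect_mod[of p "\<lambda>t. g (int t)" "-4"] prime_gt_0_nat[OF assms(1)]
    by simp
  also have "[\<dots> = (\<Sum>t<p. g (-4 - int t))] (mod int p)"
    unfolding g_def by (intro cong_sum cong_pow cong_mult cong_add cong_refl) (auto simp: cong_def)
  also have "(\<Sum>t<p. g (-4 - int t)) = - ?S"
    by (simp add: odd_g sum_negf)
  finally have "int p dvd 2 * ?S"
    by (simp add: cong_iff_dvd_diff)
  moreover have "\<not> int p dvd 2"
  proof
    assume "int p dvd 2"
    then have "int p \<le> 2" by (rule zdvd_imp_le) simp
    then show False using assms(2) by simp
  qed
  moreover have "prime (int p)"
    using assms(1) by simp
  ultimately have "int p dvd ?S"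
    using prime_dvd_mult_iff by blast
  then show ?thesis
    by (simp add: g_def)
qed

lemma progression_product_power_expand:
  fixes x :: "'a::comm_ring_1"
  shows "(x * (x + 2) * (x + 4)) ^ n
    = (\<Sum>k\<le>n. (-1) ^ k * of_nat (n choose k) * (x ^ n * (x + 3) ^ (2 * (n - k))))"
proof -
  have "x * (x + 2) * (x + 4) = x * (-1 + (x + 3) ^ 2)"
    by (simp add: algebra_simps power2_eq_square)
  then have "(x * (x + 2) * (x + 4)) ^ n = x ^ n * (-1 + (x + 3) ^ 2) ^ n"
    by (simp add: power_mult_distrib)
  also have "\<dots> = x ^ n * (\<Sum>k\<le>n. of_nat (n choose k) * (-1) ^ k * ((x + 3) ^ 2) ^ (n - k))"
    by (simp only: binomial_ring)
  finally show ?thesis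
    by (simp add: sum_distrib_left power_mult[symmetric] mult_ac)
qed

lemma double_dvd_self_plus_iff:
  fixes n i :: nat
  assumes "0 < n" "i \<le> 2 * n"
  shows "2 * n dvd n + i \<longleftrightarrow> i = n"
proof
  assume "2 * n dvd n + i"
  then obtain q where q: "n + i = 2 * n * q" by (auto elim: dvdE)
  have "q \<noteq> 0"
  proof
    assume "q = 0"
    with q assms(1) show False by simp
  qed
  moreover have "q < 2"
  proof (rule ccontr)
    assume "\<not> q < 2"
    then have "2 * n * 2 \<le> 2 * n * q" by simp
    then show False using q assms by linarith
  qed
  ultimately have "q = 1" by simp
  then show "i = n" using q by simp
qed (simp flip: mult_2)

lemma sum_power_times_shifted_power_cong:
  assumes "prime p" "p = 2 * n + 1" "j \<le> 2 * n"
  shows "[(\<Sum>t<p. int t ^ n * (int t + c) ^ j) = - (int (j choose n) * c ^ (j - n))] (mod int p)"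
proof -
  have "0 < n" using assms(1,2) prime_gt_1_nat[OF assms(1)] by simp
  have "(\<Sum>t<p. int t ^ n * (int t + c) ^ j)
      = (\<Sum>t<p. \<Sum>i\<le>j. int (j choose i) * c ^ (j - i) * int t ^ (n + i))"
    by (simp add: binomial_ring sum_distrib_left power_add mult_ac)
  also have "\<dots> = (\<Sum>i\<le>j. \<Sum>t<p. int (j choose i) * c ^ (j - i) * int t ^ (n + i))"
    by (rule sum.swap)
  also have "\<dots> = (\<Sum>i\<le>j. int (j choose i) * c ^ (j - i) * (\<Sum>t<p. int t ^ (n + i)))"
    by (simp add: sum_distrib_left)
  also have "[\<dots> = (\<Sum>i\<le>j. int (j choose i) * c ^ (j - i) * (if i = n then -1 else 0))] (mod int p)"
  proof (intro cong_sum cong_mult cong_refl)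
    fix i assume "i \<in> {..j}"
    \<comment> \<open>\<open>0 < n + i \<le> 3n < 2(p - 1)\<close>, so only \<open>t^(2n)\<close> has a nonzero power sum\<close>
    then have "(p - 1) dvd (n + i) \<longleftrightarrow> i = n"
      using assms(2,3) double_dvd_self_plus_iff[OF \<open>0 < n\<close>] by simp
    then show "[(\<Sum>t<p. int t ^ (n + i)) = (if i = n then -1 else 0)] (mod int p)"
      using power_sum_mod_prime[OF assms(1), of "n + i"] \<open>0 < n\<close> by simp
  qed
  also have "(\<Sum>i\<le>j. int (j choose i) * c ^ (j - i) * (if i = n then -1 else 0))
      = (\<Sum>i\<le>j. if i = n then - (int (j choose i) * c ^ (j - i)) else 0)"
    by (rule sum.cong) simp_all
  also have "\<dots> = - (int (j choose n) * c ^ (j - n))"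
    by (cases "n \<le> j") (simp_all add: sum.delta)
  finally show ?thesis .
qed

lemma legendreP_eq_binomial_sum:
  "legendreP n x = (\<Sum>k\<le>n. (-1) ^ k * of_nat (n choose k) * of_nat ((2 * n - 2 * k) choose n)
      * x ^ (n - 2 * k)) / 2 ^ n"
proof -
  have coeff_eq: "of_int ((-1) ^ k) * of_nat (fact (2*n - 2*k))
        / (of_nat (fact k) * of_nat (fact (n - k)) * of_nat (fact (n - 2*k))) * x ^ (n - 2*k)
      = (-1) ^ k * of_nat (n choose k) * of_nat ((2 * n - 2 * k) choose n) * x ^ (n - 2 * k)"
    if "k \<in> {0..n div 2}" for k
  proof -
    from that have "k \<le> n" "n \<le> 2 * n - 2 * k" "2 * n - 2 * k - n = n - 2 * k" by auto
    then have "of_nat (n choose k) * of_nat ((2 * n - 2 * k) choose n)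
        = (fact n / (fact k * fact (n - k))) * (fact (2 * n - 2 * k) / (fact n * fact (n - 2 * k)) :: 'a)"
      by (metis binomial_fact)
    then show ?thesis
      by (simp add: of_nat_fact field_simps)
  qed
  have "(\<Sum>k\<le>n. (-1) ^ k * of_nat (n choose k) * of_nat ((2 * n - 2 * k) choose n) * x ^ (n - 2 * k))
      = (\<Sum>k = 0..n div 2. (-1) ^ k * of_nat (n choose k) * of_nat ((2 * n - 2 * k) choose n) * x ^ (n - 2 * k))"
    by (rule sum.mono_neutral_right) auto
  also have "\<dots> = (\<Sum>k = 0..n div 2. of_int ((-1) ^ k) * of_nat (fact (2*n - 2*k))
        / (of_nat (fact k) * of_nat (fact (n - k)) * of_nat (fact (n - 2*k))) * x ^ (n - 2*k))"
    by (rule sum.cong[OF refl coeff_eq[symmetric]])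
  finally show ?thesis
    unfolding legendreP_def by simp
qed

lemma prime_dvd_legendre_numerator_at_3:
  assumes "prime p" "p = 2 * n + 1" "odd n"
  shows "int p dvd (\<Sum>k\<le>n. (-1) ^ k * int (n choose k) * int ((2 * n - 2 * k) choose n) * 3 ^ (n - 2 * k))"
    (is "_ dvd ?N")
proof -
  let ?T = "\<Sum>t<p. (int t * (int t + 2) * (int t + 4)) ^ n"
  let ?U = "\<lambda>k. \<Sum>t<p. int t ^ n * (int t + 3) ^ (2 * (n - k))"
  have "?T = (\<Sum>t<p. \<Sum>k\<le>n. (-1) ^ k * int (n choose k) * (int t ^ n * (int t + 3) ^ (2 * (n - k))))"
    by (simp only: progression_product_power_expand)
  also have "\<dots> = (\<Sum>k\<le>n. \<Sum>t<p. (-1) ^ k * int (n choose k) * (int t ^ n * (int t + 3) ^ (2 * (n - k))))"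
    by (rule sum.swap)
  also have "\<dots> = (\<Sum>k\<le>n. (-1) ^ k * int (n choose k) * ?U k)"
    by (simp add: sum_distrib_left)
  finally have T_eq: "?T = (\<Sum>k\<le>n. (-1) ^ k * int (n choose k) * ?U k)" .
  have "[(\<Sum>k\<le>n. (-1) ^ k * int (n choose k) * ?U k)
      = (\<Sum>k\<le>n. (-1) ^ k * int (n choose k) * - (int ((2 * (n - k)) choose n) * 3 ^ (2 * (n - k) - n)))] (mod int p)"
    by (intro cong_sum cong_mult cong_refl sum_power_times_shifted_power_cong[OF assms(1,2)]) simp
  also have "(\<Sum>k\<le>n. (-1) ^ k * int (n choose k) * - (int ((2 * (n - k)) choose n) * 3 ^ (2 * (n - k) - n))) = - ?N"
    by (simp add: sum_negf diff_mult_distrib2 mult.assoc)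
  finally have "[?T = - ?N] (mod int p)"
    unfolding T_eq .
  moreover have "int p dvd ?T"
    using prime_dvd_sum_odd_power_progression_product[OF assms(1) _ assms(3)] assms(2,3)
    by (cases n) auto
  ultimately show ?thesis
    using cong_dvd_iff dvd_minus_iff by blast
qed

lemma prime_dvd_quotient_of_numerator:
  fixes p N d :: int
  assumes "prime p" "p dvd N" "\<not> p dvd d"
  shows "p dvd fst (quotient_of (of_int N / of_int d))"
proof -
  obtain a b where ab: "quotient_of (of_int N / of_int d) = (a, b)"
    by (cases "quotient_of (of_int N / of_int d)")
  have "b > 0" "of_int a / of_int b = (of_int N / of_int d :: rat)"
    using ab quotient_of_denom_pos quotient_of_div by metis+
  moreover have "d \<noteq> 0"
    using assms(3) by auto
  ultimately have "a * d = N * b"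
    by (simp add: field_simps flip: of_int_mult)
  then have "p dvd a * d"
    using assms(2) by simp
  then have "p dvd a"
    using assms(1,3) prime_dvd_mult_iff by blast
  then show ?thesis
    using ab by simp
qed

theorem corollary2p3:
  fixes p :: nat
  assumes "prime p" and "p mod 4 = 3"
  shows "int p dvd fst (quotient_of (legendreP ((p - 1) div 2) (3 :: rat)))"
proof -
  define n where "n = (p - 1) div 2"
  define N where "N = (\<Sum>k\<le>n. (-1) ^ k * int (n choose k) * int ((2 * n - 2 * k) choose n) * 3 ^ (n - 2 * k))"
  have "p = 2 * n + 1" "odd n"
    using assms(2) unfolding n_def by presburger+
  then have "int p dvd N"
    unfolding N_def by (rule prime_dvd_legendre_numerator_at_3[OF assms(1)])
  moreover have "\<not> int p dvd 2 ^ n"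
  proof
    assume "int p dvd 2 ^ n"
    moreover have "prime (int p)"
      using assms(1) by simp
    ultimately have "int p dvd 2"
      using prime_dvd_power by blast
    then have "int p \<le> 2"
      by (rule zdvd_imp_le) simp
    then show False
      using assms(2) by simp
  qed
  ultimately have "int p dvd fst (quotient_of (of_int N / of_int (2 ^ n)))"
    using assms(1) by (intro prime_dvd_quotient_of_numerator) simp_all
  moreover have "legendreP n (3 :: rat) = of_int N / of_int (2 ^ n)"
    unfolding legendreP_eq_binomial_sum N_def by simp
  ultimately show ?thesis
    unfolding n_def by simp
qed

end
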